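(* Let $X=X_1\cdots X_n$ with independent $X_i\sim\mathrm{Bernoulli}(p_i)$, $p=(p_1,\dots,p_n)\in[0,1]^n$, and let $Y$ be the output of a deletion channel (deletion probability $\delta$) with input $X$. Let $y=y_1\cdots y_m$ be an observed trace with $\Pr(Y=y)>0$. Then for every $i\in\{1,\dots,n\}$, $$\Pr(X_i=1\mid Y=y)=\frac{p_i}{\mathbf F(p,y)}\left(\mathbf F(p_{[n]\setminus\{i\}},y)+\sum_{k:\,y_k=1}\mathbf F(p_{[1:i-1]},y_{[1:k-1]})\,\mathbf F(p_{[i+1:n]},y_{[k+1:m]})\right).$$
   Context: The deletion channel with deletion probability $\delta$ deletes each input symbol independently with probability $\delta$ and outputs the subsequence of undeleted symbols. For integers $a,b$, $[a:b]=\{a,\dots,b\}$ if $b\ge a$ and $\emptyset$ otherwise; $[n]=[1:n]$; $p_T$ denotes the subvector of $p$ indexed by $T$ and $y_T$ the corresponding subsequence of $y$ (empty when $T=\emptyset$). The relaxed binomial coefficient $\mathbf F:[0,1]^{n'}\times\{0,1\}^{m'}\to\mathbb R$ is: if $1\le m'\le n'$, $\mathbf F(q,v)=\sum_{S\subseteq[n'],|S|=m'}\prod_{j=1}^{m'} q_{S_j}^{v_j}(1-q_{S_j})^{1-v_j}$ with $S_1<\dots<S_{m'}$ the elements of $S$; if $m'=0\le n'$, $\mathbf F(q,v)=1$; otherwise $\mathbf F(q,v)=0$. *)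

theory Defs
  imports "HOL-Probability.Probability_Mass_Function"
begin

text \<open>Input X = X_1...X_n with independent X_i ~ Bernoulli(p_i), as a random bool list
  (True = symbol 1).\<close>
fun bern_list :: "real list \<Rightarrow> bool list pmf" where
  "bern_list [] = return_pmf []"
| "bern_list (q # qs) =
     bind_pmf (bernoulli_pmf q) (\<lambda>b. bind_pmf (bern_list qs) (\<lambda>bs. return_pmf (b # bs)))"

fun deletion_channel :: "real \<Rightarrow> bool list \<Rightarrow> bool list pmf" where
  "deletion_channel d [] = return_pmf []"
| "deletion_channel d (b # bs) =
     bind_pmf (bernoulli_pmf d) (\<lambda>del. bind_pmf (deletion_channel d bs)
        (\<lambda>r. return_pmf (if del then r else b # r)))"

definition joint_XY :: "real list \<Rightarrow> real \<Rightarrow> (bool list \<times> bool list) pmf" where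
  "joint_XY p d = bind_pmf (bern_list p) (\<lambda>x. map_pmf (\<lambda>y. (x, y)) (deletion_channel d x))"

text \<open>Relaxed binomial coefficient F(q,v); lists are 0-indexed, S_j is the j-th smallest
  element of S.\<close>
definition relaxed_binom :: "real list \<Rightarrow> bool list \<Rightarrow> real" where
  "relaxed_binom q v =
     (if 1 \<le> length v \<and> length v \<le> length q then
        (\<Sum>S\<in>{S. S \<subseteq> {0..<length q} \<and> card S = length v}.
           \<Prod>j<length v. (let s = sorted_list_of_set S ! j in
              (q ! s) ^ (if v ! j then 1 else 0) * (1 - q ! s) ^ (if v ! j then 0 else 1)))
      else if length v = 0 then 1 else 0)"

end

theory Submission
  imports Defs
begin

text \<open>Peeling off the first input symbol gives the trace probability Pr(Y = y) a recursion:
  the symbol is deleted (weight \<delta>) or kept and matched against y_1 (weight (1 - \<delta>) p_1 or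
  (1 - \<delta>)(1 - p_1)). Unwinding it, Pr(Y = y) = \<delta>^(n-m) (1-\<delta>)^m F(p, y), because splitting the
  index sets S according to whether they contain the first index shows that F obeys the same
  recursion without the factors \<delta> and 1 - \<delta>. On the event X_i = 1, the symbol X_i is either
  deleted, and y is a trace of the other n - 1 symbols, or it survives as some y_k = 1, and then
  X_1 ... X_(i-1) produce y_1 ... y_(k-1) while X_(i+1) ... X_n produce y_(k+1) ... y_m. Every term
  carries the same factor \<delta>^(n-m) (1-\<delta>)^m, which cancels in the conditional probability.\<close>

definition bit_weight :: "real \<Rightarrow> bool \<Rightarrow> real" where
  "bit_weight q b = (if b then q else 1 - q)"

fun relaxed_binom_rec :: "real list \<Rightarrow> bool list \<Rightarrow> real" where
  "relaxed_binom_rec [] v = (if v = [] then 1 else 0)"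
| "relaxed_binom_rec (a # q) v = relaxed_binom_rec q v
     + (case v of [] \<Rightarrow> 0 | b # v' \<Rightarrow> bit_weight a b * relaxed_binom_rec q v')"

lemma relaxed_binom_rec_Nil_right [simp]: "relaxed_binom_rec q [] = 1"
  by (induction q) simp_all

lemma relaxed_binom_rec_eq_0: "length q < length v \<Longrightarrow> relaxed_binom_rec q v = 0"
  by (induction q arbitrary: v) (auto split: list.split)

lemma mult_power_diff_relaxed_binom_rec:
  "x * (x ^ (length q - length v) * relaxed_binom_rec q v) =
     x ^ (Suc (length q) - length v) * relaxed_binom_rec q v"
  by (cases "length v \<le> length q") (simp_all add: Suc_diff_le relaxed_binom_rec_eq_0)

lemma sorted_list_of_set_image_Suc:
  assumes "finite T"
  shows "sorted_list_of_set (Suc ` T) = map Suc (sorted_list_of_set T)"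
proof (rule sorted_list_of_set_unique[THEN iffD1])
  show "sorted_wrt (<) (map Suc (sorted_list_of_set T))
      \<and> set (map Suc (sorted_list_of_set T)) = Suc ` T
      \<and> length (map Suc (sorted_list_of_set T)) = card (Suc ` T)"
    using assms sorted_list_of_set.strict_sorted_key_list_of_set[of T]
    by (simp add: sorted_wrt_map card_image)
qed (use assms in simp)

lemma sorted_list_of_set_insert_0_image_Suc:
  assumes "finite T"
  shows "sorted_list_of_set (insert 0 (Suc ` T)) = 0 # map Suc (sorted_list_of_set T)"
  using assms by (simp add: sorted_list_of_set_image_Suc insort_is_Cons)

lemma image_Suc_preimage: "Suc ` {t. Suc t \<in> S} = S - {0}"
  by (auto simp: image_iff) (metis not0_implies_Suc)

lemma sum_subsets_atLeast0_lessThan_Suc: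
  fixes g :: "nat set \<Rightarrow> 'a::comm_monoid_add"
  shows "(\<Sum>S | S \<subseteq> {0..<Suc n} \<and> card S = Suc m. g S) =
           (\<Sum>T | T \<subseteq> {0..<n} \<and> card T = Suc m. g (Suc ` T))
         + (\<Sum>T | T \<subseteq> {0..<n} \<and> card T = m. g (insert 0 (Suc ` T)))"
proof -
  define C where "C (n::nat) (k::nat) = {T. T \<subseteq> {0..<n} \<and> card T = k}" for n k
  have fin: "finite (C n k)" for n k
    unfolding C_def by (rule finite_subset[of _ "Pow {0..<n}"]) auto
  have card_preimage: "card {t. Suc t \<in> S} = card (S - {0})" for S
    by (metis image_Suc_preimage card_image inj_Suc)
  have "C (Suc n) (Suc m) \<subseteq> image Suc ` C n (Suc m) \<union> (\<lambda>T. insert 0 (Suc ` T)) ` C n m"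
  proof
    fix S assume S: "S \<in> C (Suc n) (Suc m)"
    define T where "T = {t. Suc t \<in> S}"
    have T: "T \<subseteq> {0..<n}" using S by (auto simp: C_def T_def)
    have "finite S" using S by (auto simp: C_def intro: finite_subset)
    show "S \<in> image Suc ` C n (Suc m) \<union> (\<lambda>T. insert 0 (Suc ` T)) ` C n m"
    proof (cases "0 \<in> S")
      case True
      then have "S = insert 0 (Suc ` T)" "card T = m"
        using S \<open>finite S\<close> image_Suc_preimage[of S] card_preimage[of S]
        by (auto simp: C_def T_def)
      then show ?thesis using T by (auto simp: C_def)
    next
      case False
      then have "S = Suc ` T" "card T = Suc m"
        using S image_Suc_preimage[of S] card_preimage[of S] by (auto simp: C_def T_def)
      then show ?thesis using T by (auto simp: C_def)
    qed
  qed
  moreover have "image Suc ` C n (Suc m) \<union> (\<lambda>T. insert 0 (Suc ` T)) ` C n m \<subseteq> C (Suc n) (Suc m)"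
    by (auto simp: C_def card_image card_insert_if finite_subset)
  ultimately have split:
      "C (Suc n) (Suc m) = image Suc ` C n (Suc m) \<union> (\<lambda>T. insert 0 (Suc ` T)) ` C n m"
    by blast
  have inj0: "inj_on (image Suc) X" for X :: "nat set set"
    by (rule inj_on_image) simp
  have inj1: "inj_on (\<lambda>T. insert 0 (Suc ` T)) X" for X :: "nat set set"
    by (rule inj_onI) (metis inj0[THEN inj_onD] Diff_insert_absorb zero_notin_Suc_image UNIV_I)
  show ?thesis
    unfolding C_def[symmetric] split
    by (subst sum.union_disjoint) (auto simp: fin sum.reindex inj0 inj1)
qed

definition relaxed_binom_subsets :: "real list \<Rightarrow> bool list \<Rightarrow> real" where
  "relaxed_binom_subsets q v = (\<Sum>S | S \<subseteq> {0..<length q} \<and> card S = length v.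
     \<Prod>j<length v. bit_weight (q ! (sorted_list_of_set S ! j)) (v ! j))"

lemma relaxed_binom_subsets_Nil_right: "relaxed_binom_subsets q [] = 1"
proof -
  have "{S. S \<subseteq> {0..<length q} \<and> card S = 0} = {{}}"
    using finite_subset[of _ "{0..<length q}"] by fastforce
  then show ?thesis by (simp add: relaxed_binom_subsets_def)
qed

lemma relaxed_binom_subsets_Nil_left: "v \<noteq> [] \<Longrightarrow> relaxed_binom_subsets [] v = 0"
  by (simp add: relaxed_binom_subsets_def)

lemma relaxed_binom_eq_subsets: "relaxed_binom q v = relaxed_binom_subsets q v"
proof -
  consider "v = []" | "v \<noteq> []" "length v \<le> length q" | "length q < length v"
    by linarith
  then show ?thesis
  proof cases
    case 1
    then show ?thesis by (simp add: relaxed_binom_def relaxed_binom_subsets_Nil_right)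
  next
    case 2
    then show ?thesis
      unfolding relaxed_binom_def relaxed_binom_subsets_def
      by (auto simp: Let_def bit_weight_def Suc_le_eq intro!: sum.cong prod.cong)
  next
    case 3
    have card_le: "card S \<le> length q" if "S \<subseteq> {0..<length q}" for S
      using card_mono[OF finite_atLeastLessThan that] by simp
    have no_subsets: "{S. S \<subseteq> {0..<length q} \<and> card S = length v} = {}"
      using 3 by (auto dest!: card_le)
    show ?thesis
      using 3 unfolding relaxed_binom_def relaxed_binom_subsets_def no_subsets by auto
  qed
qed

lemma relaxed_binom_subsets_Cons:
  "relaxed_binom_subsets (a # q) (b # v) =
     relaxed_binom_subsets q (b # v) + bit_weight a b * relaxed_binom_subsets q v"
proof -
  define f where "f S = (\<Prod>j<Suc (length v).
    bit_weight ((a # q) ! (sorted_list_of_set S ! j)) ((b # v) ! j))" for S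
  have shift: "f (Suc ` T) =
      (\<Prod>j<length (b # v). bit_weight (q ! (sorted_list_of_set T ! j)) ((b # v) ! j))"
    if "T \<subseteq> {0..<length q}" "card T = Suc (length v)" for T
    unfolding f_def using that
    by (auto simp: sorted_list_of_set_image_Suc finite_subset intro!: prod.cong)
  have insert0: "f (insert 0 (Suc ` T)) =
      bit_weight a b * (\<Prod>j<length v. bit_weight (q ! (sorted_list_of_set T ! j)) (v ! j))"
    if "T \<subseteq> {0..<length q}" "card T = length v" for T
  proof -
    have "finite T" using that(1) by (rule finite_subset) simp
    then show ?thesis
      unfolding f_def sorted_list_of_set_insert_0_image_Suc[OF \<open>finite T\<close>] prod.lessThan_Suc_shift
      using that by (auto intro!: prod.cong)
  qed
  have "relaxed_binom_subsets (a # q) (b # v) =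
      (\<Sum>S | S \<subseteq> {0..<Suc (length q)} \<and> card S = Suc (length v). f S)"
    unfolding relaxed_binom_subsets_def f_def by simp
  also have "\<dots> = (\<Sum>T | T \<subseteq> {0..<length q} \<and> card T = Suc (length v). f (Suc ` T))
      + (\<Sum>T | T \<subseteq> {0..<length q} \<and> card T = length v. f (insert 0 (Suc ` T)))"
    by (rule sum_subsets_atLeast0_lessThan_Suc)
  also have "\<dots> = relaxed_binom_subsets q (b # v) + bit_weight a b * relaxed_binom_subsets q v"
    unfolding relaxed_binom_subsets_def sum_distrib_left
    by (intro arg_cong2[where f = "(+)"] sum.cong) (auto simp: shift insert0)
  finally show ?thesis .
qed

lemma relaxed_binom_eq_rec: "relaxed_binom q v = relaxed_binom_rec q v"
proof -
  have "relaxed_binom_subsets q v = relaxed_binom_rec q v"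
    by (induction q arbitrary: v)
      (auto simp: relaxed_binom_subsets_Nil_right relaxed_binom_subsets_Nil_left
        relaxed_binom_subsets_Cons neq_Nil_conv split: list.split)
  then show ?thesis by (simp add: relaxed_binom_eq_subsets)
qed

lemma joint_XY_Nil: "joint_XY [] d = return_pmf ([], [])"
  by (simp add: joint_XY_def bind_return_pmf)

lemma joint_XY_Cons:
  "joint_XY (q # qs) d = bind_pmf (bernoulli_pmf q) (\<lambda>b. bind_pmf (bernoulli_pmf d)
     (\<lambda>del. map_pmf (\<lambda>(x, y). (b # x, if del then y else b # y)) (joint_XY qs d)))"
proof -
  have "joint_XY (q # qs) d = bind_pmf (bernoulli_pmf q) (\<lambda>b. bind_pmf (bern_list qs)
      (\<lambda>x. bind_pmf (bernoulli_pmf d)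
        (\<lambda>del. map_pmf (\<lambda>y. (b # x, if del then y else b # y)) (deletion_channel d x))))"
    by (simp add: joint_XY_def bind_assoc_pmf bind_return_pmf map_bind_pmf map_pmf_def)
  also have "\<dots> = bind_pmf (bernoulli_pmf q) (\<lambda>b. bind_pmf (bernoulli_pmf d)
      (\<lambda>del. bind_pmf (bern_list qs)
        (\<lambda>x. map_pmf (\<lambda>y. (b # x, if del then y else b # y)) (deletion_channel d x))))"
    by (subst bind_commute_pmf) simp
  also have "\<dots> = bind_pmf (bernoulli_pmf q) (\<lambda>b. bind_pmf (bernoulli_pmf d)
      (\<lambda>del. map_pmf (\<lambda>(x, y). (b # x, if del then y else b # y)) (joint_XY qs d)))"
    by (simp add: joint_XY_def map_bind_pmf pmf.map_comp o_def)
  finally show ?thesis .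
qed

lemma measure_bind_bernoulli_pmf:
  assumes "0 \<le> q" "q \<le> 1"
  shows "measure_pmf.prob (bind_pmf (bernoulli_pmf q) N) X =
     q * measure_pmf.prob (N True) X + (1 - q) * measure_pmf.prob (N False) X"
proof -
  have "ennreal (measure_pmf.prob (bind_pmf (bernoulli_pmf q) N) X) =
      ennreal (measure_pmf.prob (N True) X) * q + ennreal (measure_pmf.prob (N False) X) * (1 - q)"
    using assms by (simp add: measure_pmf.emeasure_eq_measure[symmetric])
  also have "\<dots> = ennreal (q * measure_pmf.prob (N True) X + (1 - q) * measure_pmf.prob (N False) X)"
    using assms by (simp add: ennreal_mult'' ennreal_plus[symmetric] mult.commute)
  finally show ?thesis
    using assms by (subst (asm) ennreal_inj) auto
qed

lemma prob_joint_XY_Cons: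
  assumes "0 \<le> q" "q \<le> 1" "0 \<le> d" "d \<le> 1"
  shows "measure_pmf.prob (joint_XY (q # qs) d) X =
    q * (d * measure_pmf.prob (joint_XY qs d) {xy. (True # fst xy, snd xy) \<in> X}
       + (1 - d) * measure_pmf.prob (joint_XY qs d) {xy. (True # fst xy, True # snd xy) \<in> X})
  + (1 - q) * (d * measure_pmf.prob (joint_XY qs d) {xy. (False # fst xy, snd xy) \<in> X}
       + (1 - d) * measure_pmf.prob (joint_XY qs d) {xy. (False # fst xy, False # snd xy) \<in> X})"
  unfolding joint_XY_Cons using assms
  by (simp add: measure_bind_bernoulli_pmf vimage_def case_prod_beta)

fun trace_prob :: "real \<Rightarrow> real list \<Rightarrow> bool list \<Rightarrow> real" where
  "trace_prob d [] y = (if y = [] then 1 else 0)"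
| "trace_prob d (q # qs) y = d * trace_prob d qs y
     + (1 - d) * (case y of [] \<Rightarrow> 0 | b # y' \<Rightarrow> bit_weight q b * trace_prob d qs y')"

lemma prob_trace_eq_trace_prob:
  assumes "\<forall>q\<in>set p. 0 \<le> q \<and> q \<le> 1" "0 \<le> d" "d \<le> 1"
  shows "measure_pmf.prob (joint_XY p d) {xy. snd xy = y} = trace_prob d p y"
  using assms(1)
proof (induction p arbitrary: y)
  case Nil
  then show ?case by (simp add: joint_XY_Nil indicator_def)
next
  case (Cons q qs)
  then have q: "0 \<le> q" "q \<le> 1"
    and IH: "\<And>y. measure_pmf.prob (joint_XY qs d) {xy. snd xy = y} = trace_prob d qs y"
    by auto
  have Cons_eq: "{xy. c # snd xy = b # y'} = (if c = b then {xy. snd xy = y'} else {})"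
    for c b :: bool and y' :: "bool list"
    by auto
  show ?case
    using q assms IH
    by (cases y) (auto simp: prob_joint_XY_Cons Cons_eq bit_weight_def algebra_simps)
qed

lemma trace_prob_eq_relaxed_binom_rec:
  "trace_prob d p y = d ^ (length p - length y) * (1 - d) ^ length y * relaxed_binom_rec p y"
proof (induction p arbitrary: y)
  case Nil
  then show ?case by simp
next
  case (Cons q qs)
  show ?case
  proof (cases y)
    case Nil
    then show ?thesis using Cons.IH by simp
  next
    case (Cons b y')
    have deleted: "d * (d ^ (length qs - length y) * relaxed_binom_rec qs y) =
        d ^ (length qs - length y') * relaxed_binom_rec qs y"
      using mult_power_diff_relaxed_binom_rec[of d qs y] Cons by simp
    have "trace_prob d (q # qs) y =
        d * (d ^ (length qs - length y) * relaxed_binom_rec qs y) * (1 - d) ^ length y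
        + (1 - d) ^ length y * d ^ (length qs - length y')
          * (bit_weight q b * relaxed_binom_rec qs y')"
      using Cons by (simp add: Cons.IH algebra_simps)
    also have "\<dots> =
        d ^ (length (q # qs) - length y) * (1 - d) ^ length y * relaxed_binom_rec (q # qs) y"
      unfolding deleted using Cons by (simp add: algebra_simps)
    finally show ?thesis .
  qed
qed

text \<open>Multiplied by p_i (1 - \<delta>), the k-th summand is the probability that Y = y and that
  X_i = 1 survives as the output symbol y_k.\<close>

definition survivor_sum :: "real \<Rightarrow> nat \<Rightarrow> real list \<Rightarrow> bool list \<Rightarrow> real" where
  "survivor_sum d i p y = (\<Sum>k<length y. if y ! k then
     trace_prob d (take i p) (take k y) * trace_prob d (drop (Suc i) p) (drop (Suc k) y) else 0)"

lemma survivor_sum_0_Cons: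
  "survivor_sum d 0 (q # qs) y =
     (case y of [] \<Rightarrow> 0 | b # y' \<Rightarrow> if b then trace_prob d qs y' else 0)"
proof (cases y)
  case (Cons b y')
  have "(\<Sum>k<length y'. if y' ! k then trace_prob d (take 0 (q # qs)) (take (Suc k) (b # y')) *
      trace_prob d (drop (Suc 0) (q # qs)) (drop (Suc (Suc k)) (b # y')) else 0) = 0"
    by (rule sum.neutral) auto
  then show ?thesis
    using Cons by (simp add: survivor_sum_def sum.lessThan_Suc_shift del: sum.lessThan_Suc)
qed (simp add: survivor_sum_def)

lemma survivor_sum_Suc_Cons:
  "survivor_sum d (Suc i) (q # qs) y = d * survivor_sum d i qs y
     + (1 - d) * (case y of [] \<Rightarrow> 0 | b # y' \<Rightarrow> bit_weight q b * survivor_sum d i qs y')"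
proof -
  define T where "T = (\<Sum>k<length y. if y ! k then
      (case take k y of [] \<Rightarrow> 0 | b # z \<Rightarrow> bit_weight q b * trace_prob d (take i qs) z)
      * trace_prob d (drop (Suc i) qs) (drop (Suc k) y) else 0)"
  have "survivor_sum d (Suc i) (q # qs) y = d * survivor_sum d i qs y + (1 - d) * T"
    unfolding survivor_sum_def T_def sum_distrib_left sum.distrib[symmetric]
    by (rule sum.cong) (auto simp: algebra_simps)
  moreover have "T = (case y of [] \<Rightarrow> 0 | b # y' \<Rightarrow> bit_weight q b * survivor_sum d i qs y')"
  proof (cases y)
    case (Cons b y')
    show ?thesis
      unfolding T_def survivor_sum_def Cons
      by (simp add: sum.lessThan_Suc_shift sum_distrib_left cong: if_cong del: sum.lessThan_Suc)
        (rule sum.cong, auto)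
  qed (simp add: T_def)
  ultimately show ?thesis by simp
qed

lemma prob_trace_and_nth:
  assumes "\<forall>q\<in>set p. 0 \<le> q \<and> q \<le> 1" "0 \<le> d" "d \<le> 1" "i < length p"
  shows "measure_pmf.prob (joint_XY p d) {xy. snd xy = y \<and> fst xy ! i} =
     p ! i * (d * trace_prob d (take i p @ drop (Suc i) p) y + (1 - d) * survivor_sum d i p y)"
  using assms(1,4)
proof (induction p arbitrary: i y)
  case Nil
  then show ?case by simp
next
  case (Cons q qs)
  have q: "0 \<le> q" "q \<le> 1" using Cons.prems by auto
  show ?case
  proof (cases i)
    case 0
    have trace: "measure_pmf.prob (joint_XY qs d) {xy. snd xy = y} = trace_prob d qs y" for y
      using Cons.prems assms by (intro prob_trace_eq_trace_prob) auto
    have Cons_eq: "{xy. c # snd xy = y \<and> c} =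
        (case y of [] \<Rightarrow> {} | b # y' \<Rightarrow> if c = b \<and> c then {xy. snd xy = y'} else {})" for c
      by (cases y) auto
    show ?thesis
      using q assms 0 trace
      by (cases y) (simp_all add: prob_joint_XY_Cons Cons_eq survivor_sum_0_Cons algebra_simps)
  next
    case (Suc i')
    have IH: "measure_pmf.prob (joint_XY qs d) {xy. snd xy = y \<and> fst xy ! i'} =
        qs ! i' * (d * trace_prob d (take i' qs @ drop (Suc i') qs) y
          + (1 - d) * survivor_sum d i' qs y)"
      for y using Cons Suc by auto
    have Cons_eq:
        "{xy. c # snd xy = b # y' \<and> P xy} = (if c = b then {xy. snd xy = y' \<and> P xy} else {})"
      for c b :: bool and y' :: "bool list" and P :: "bool list \<times> bool list \<Rightarrow> bool"
      by auto
    show ?thesis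
    proof (cases y)
      case Nil
      then show ?thesis
        using q assms Suc by (simp add: prob_joint_XY_Cons IH survivor_sum_Suc_Cons algebra_simps)
    next
      case (Cons b y')
      then show ?thesis
        using q assms Suc
        by (cases b)
          (simp_all add: prob_joint_XY_Cons Cons_eq IH bit_weight_def survivor_sum_Suc_Cons algebra_simps)
    qed
  qed
qed

lemma nths_remove_nth:
  assumes "i < length p"
  shows "nths p ({0..<length p} - {i}) = take i p @ drop (Suc i) p"
proof -
  have "nths (take i p) ({0..<length p} - {i}) = take i p"
    by (intro nths_all) auto
  moreover have "nths (drop (Suc i) p) {j. Suc (j + i) < length p} = drop (Suc i) p"
    by (intro nths_all) auto
  ultimately have "nths (take i p @ p ! i # drop (Suc i) p) ({0..<length p} - {i}) =
      take i p @ drop (Suc i) p"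
    using assms by (simp add: nths_append nths_Cons)
  then show ?thesis
    using id_take_nth_drop[OF assms] by simp
qed

lemma survivor_sum_eq_relaxed_binom_rec:
  assumes "i < length p"
  shows "(1 - d) * survivor_sum d i p y = d ^ (length p - length y) * (1 - d) ^ length y *
     (\<Sum>k | k < length y \<and> y ! k.
        relaxed_binom_rec (take i p) (take k y) * relaxed_binom_rec (drop (Suc i) p) (drop (Suc k) y))"
proof -
  define c where "c = d ^ (length p - length y) * (1 - d) ^ length y"
  define F where "F k = relaxed_binom_rec (take i p) (take k y)
    * relaxed_binom_rec (drop (Suc i) p) (drop (Suc k) y)" for k
  have summand: "(1 - d) * (trace_prob d (take i p) (take k y)
      * trace_prob d (drop (Suc i) p) (drop (Suc k) y)) = c * F k" if "k < length y" for k
  proof (cases "k \<le> i \<and> length y - Suc k \<le> length p - Suc i")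
    case True
    have "(i - k) + (length p - Suc i - (length y - Suc k)) = length p - length y"
      using True that assms by arith
    then have deleted:
        "d ^ (i - k) * d ^ (length p - Suc i - (length y - Suc k)) = d ^ (length p - length y)"
      by (simp flip: power_add)
    have "Suc (k + (length y - Suc k)) = length y"
      using that by arith
    then have kept: "(1 - d) * ((1 - d) ^ k * (1 - d) ^ (length y - Suc k)) = (1 - d) ^ length y"
      by (metis power_add power_Suc)
    have "(1 - d) * (trace_prob d (take i p) (take k y)
        * trace_prob d (drop (Suc i) p) (drop (Suc k) y)) =
        (d ^ (i - k) * d ^ (length p - Suc i - (length y - Suc k)))
        * ((1 - d) * ((1 - d) ^ k * (1 - d) ^ (length y - Suc k))) * F k"
      using that assms by (simp add: trace_prob_eq_relaxed_binom_rec F_def min_def mult_ac)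
    then show ?thesis
      unfolding deleted kept c_def .
  next
    case False
    then have "F k = 0"
      using that assms by (auto simp: F_def intro!: relaxed_binom_rec_eq_0)
    then show ?thesis
      by (auto simp: trace_prob_eq_relaxed_binom_rec F_def)
  qed
  have "(1 - d) * survivor_sum d i p y = (\<Sum>k<length y. if y ! k then c * F k else 0)"
    unfolding survivor_sum_def sum_distrib_left by (rule sum.cong) (auto simp: summand)
  also have "\<dots> = c * (\<Sum>k | k < length y \<and> y ! k. F k)"
    by (simp add: sum.If_cases sum_distrib_left Collect_conj_eq lessThan_def Int_commute)
  finally show ?thesis
    unfolding c_def F_def .
qed

theorem theorem6:
  fixes p :: "real list" and d :: real and y :: "bool list" and i :: nat
  assumes p_range: "\<forall>q\<in>set p. 0 \<le> q \<and> q \<le> 1"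
    and d_range: "0 \<le> d" "d \<le> 1"
    and pos: "measure_pmf.prob (joint_XY p d) {xy. snd xy = y} > 0"
    and i_range: "i < length p"
  shows "measure_pmf.prob (joint_XY p d) {xy. snd xy = y \<and> fst xy ! i}
           / measure_pmf.prob (joint_XY p d) {xy. snd xy = y}
         = p ! i / relaxed_binom p y *
           (relaxed_binom (nths p ({0..<length p} - {i})) y
            + (\<Sum>k\<in>{k. k < length y \<and> y ! k}.
                 relaxed_binom (take i p) (take k y) * relaxed_binom (drop (i+1) p) (drop (k+1) y)))"
proof -
  define c where "c = d ^ (length p - length y) * (1 - d) ^ length y"
  have trace: "measure_pmf.prob (joint_XY p d) {xy. snd xy = y} = c * relaxed_binom p y"
    using prob_trace_eq_trace_prob[OF p_range d_range]
    by (simp add: trace_prob_eq_relaxed_binom_rec relaxed_binom_eq_rec c_def)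
  have deleted: "d * trace_prob d (take i p @ drop (Suc i) p) y =
      c * relaxed_binom (nths p ({0..<length p} - {i})) y"
    using mult_power_diff_relaxed_binom_rec[of d "take i p @ drop (Suc i) p" y] i_range
    by (simp add: trace_prob_eq_relaxed_binom_rec relaxed_binom_eq_rec nths_remove_nth c_def mult_ac)
  have "measure_pmf.prob (joint_XY p d) {xy. snd xy = y \<and> fst xy ! i} =
      p ! i * (c * (relaxed_binom (nths p ({0..<length p} - {i})) y
        + (\<Sum>k\<in>{k. k < length y \<and> y ! k}.
            relaxed_binom (take i p) (take k y) * relaxed_binom (drop (i+1) p) (drop (k+1) y))))"
    unfolding prob_trace_and_nth[OF p_range d_range i_range] deleted
      survivor_sum_eq_relaxed_binom_rec[OF i_range]
    by (simp add: relaxed_binom_eq_rec c_def distrib_left)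
  moreover have "c \<noteq> 0" "relaxed_binom p y \<noteq> 0"
    using pos trace by auto
  ultimately show ?thesis
    unfolding trace by simp
qed

end
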